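(* Let $\mathcal{S}$ be a relational schema and $\mathcal{D}$ a domain of atomic values (represented algebraically, types as sorts and predicates as equationally defined Boolean-valued operators), and assume that for each relational algebra expression $R$ over $\mathcal{S}$ and $\mathcal{D}$ the signature contains a fact constructor $\mathcal{R}_R:s_1\ldots s_n\to\mathsf{Fact}$, where $n$ is the arity of $R$ and $s_i$ is the sort of its $i$-th column. For a relational database instance $I$ over $\mathcal{S}$ let $\mathrm{Tr}_b(I)$ be the multiset of facts $\mathcal{R}_r(\vec t)$ over all relation symbols $r$ of $\mathcal{S}$ and all tuples $(\vec t)\in r^I$. Then for every relational algebra expression $R$ there exists a closed deterministic query $\mathrm{Tr}(R)$ such that for every relational database instance $I$ with schema $\mathcal{S}$ and every tuple $\vec t$: $$\exists F.\ \bigl(\mathrm{Init}_{\mathrm{Tr}(R)}(\mathrm{Tr}_b(I))\to^!\mathrm{Ans}(F\circ\mathcal{R}_R(\vec t))\bigr)\quad\text{iff}\quad(\vec t)\in\mathrm{Eval}_I(R),$$ where $\mathrm{Eval}_I(R)$ is the set of tuples obtained by evaluating $R$ on $I$.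
   Context: Relational algebra expressions are built from base relations of $\mathcal{S}$ with projection $\pi_{i_1,\dots,i_k}(R)$, selection $\sigma_\phi(R)$ (where $\phi$ is a Boolean term over placeholders $\$_1,\dots,\$_n$ for the columns of $R$), union $R\cup S$, Cartesian product $R\times S$ and difference $R\setminus S$, with the usual set semantics and positional attributes. Query language. Terms are over an order-sorted signature $\Sigma$ with sorts $\mathsf{Fact}$, $\mathsf{Bool}$, interpreted in an algebra presented by structural axioms $A$ and confluent terminating equations, with Boolean connectives and Boolean-valued equality; ground $\mathsf{Bool}$ terms reduce to $\mathsf{true}$ or $\mathsf{false}$. Multisets of facts: associative commutative $\circ$ with identity $\emptyset$. A terminating and preserving pattern $P$ is $[F_1]_!\circ[F_2]_?$ or $[F_2]_?$; $P_!,P_?$ are the wrapped multisets ($P_!=\emptyset$ if absent). Conditions: $\mathrm{False}$, $\{B\}$, $\neg\psi$, $\psi_1\vee\psi_2$, $\exists P.\psi$. Queries: $\emptyset$; facts $f$; $Q_1\oplus Q_2$; $\varphi\Rightarrow Q$; $\mathrm{From}\,P.Q$; quantifiers bind the variables of $P$ not bound by the context; a query is closed if all its variables are bound by enclosing patterns. Condition evaluation: frames $\mathrm{Res}(B)$, $\mathrm{Not}$, $[\vec a]^{\vec v}_\psi$, $[\vec a]^{\vec v,\downarrow}_\psi$, $[F'\mid\vec a]^{\vec v}_{\exists P.\psi}$ with $\sigma=\{\vec a/\vec v\}$, and rules ("$X\mapsto Y$" meaning $\{F,S\,X\}^c\to\{F,S\,Y\}^c$): $[\vec a]_{\mathrm{False}}\mapsto\mathrm{Res}(\mathsf{false})$;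 $[\vec a]_{\{B\}}\mapsto\mathrm{Res}(\sigma(B))$; $[\vec a]_{\neg\psi}\mapsto\mathrm{Not}[\vec a]_\psi$; $\mathrm{Not}\,\mathrm{Res}(B)\mapsto\mathrm{Res}(\neg B)$; $[\vec a]_{\psi_1\vee\psi_2}\mapsto[\vec a]^\downarrow_{\psi_1}[\vec a]_{\psi_2}$; $[\vec a]^\downarrow_\psi\mathrm{Res}(\mathsf{true})\mapsto\mathrm{Res}(\mathsf{true})$; $[\vec a]^\downarrow_\psi\mathrm{Res}(\mathsf{false})\mapsto[\vec a]_\psi$; $[\vec a]_{\exists P.\psi}\mapsto[F\mid\vec a]_{\exists P.\psi}$; if $\vec w$ lists the variables of $P$ not in $\vec v$, $\sigma'=\{\vec a/\vec v,\vec b/\vec w\}$, $F'=F''\circ\sigma'(P_!\circ P_?)$: $[F'\mid\vec a]_{\exists P.\psi}\mapsto[F''\circ\sigma'(P_!)\mid\vec a]_{\exists P.\psi}[\vec a,\vec b]^{\vec v,\vec w}_\psi$; $[F'\mid\vec a]_{\exists P.\psi}\mathrm{Res}(\mathsf{false})\mapsto[F'\mid\vec a]_{\exists P.\psi}$; $[F'\mid\vec a]_{\exists P.\psi}\mathrm{Res}(\mathsf{true})\mapsto\mathrm{Res}(\mathsf{true})$; if no matching exists, $[F'\mid\vec a]_{\exists P.\psi}\mapsto\mathrm{Res}(\mathsf{false})$. Query evaluation: states $\{F,F',S\}^q$ ($F$ database, $F'$ partial answer), terminal $\mathrm{Ans}(F')$; with "$X\mapsto Y$" meaning $\{F,F',S\,X\}^q\to\{F,F',S\,Y\}^q$: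 $\{F,F',S[\vec a]_f\}^q\to\{F,F'\circ\sigma(f),S\}^q$; $[\vec a]_\emptyset\mapsto$ (nothing); $[\vec a]_{R_1\oplus R_2}\mapsto[\vec a]_{R_2}[\vec a]_{R_1}$; $[\vec a]_{\varphi\Rightarrow R}\mapsto[\vec a\mid[\vec a]^{\vec v}_\varphi]_R$; $[\vec a\mid\mathrm{Res}(\mathsf{false})]_R\mapsto$ (nothing); $[\vec a\mid\mathrm{Res}(\mathsf{true})]_R\mapsto[\vec a]_R$; for each condition rule $\{F,S'\}^c\to\{F,S''\}^c$, $[\vec a\mid S']_R\mapsto[\vec a\mid S'']_R$; $[\vec a]_{\mathrm{From}\,P.R}\mapsto[F\mid\vec a]_{\mathrm{From}\,P.R}$; if $F''=H\circ\sigma'(P_!\circ P_?)$ then $[F''\mid\vec a]_{\mathrm{From}\,P.R}\mapsto[H\circ\sigma'(P_!)\mid\vec a]_{\mathrm{From}\,P.R}[\vec a,\vec b]^{\vec v,\vec w}_R$; if no matching exists, $[F''\mid\vec a]_{\mathrm{From}\,P.R}\mapsto$ (nothing); $\{F,F',\text{empty}\}^q\to\mathrm{Ans}(F')$. $\mathrm{Init}_Q(F):=\{F,\emptyset,[\,]_Q\}^q$; $t\to^!t'$ means $t\to^*t'$ with $t'$ irreducible. A fully reduced fact term $t$ has the unique matching property if for every ground fully reduced fact $t'$ there is at most one substitution $\sigma$ with $\sigma(t)=t'$; a query is deterministic if all its quantification patterns (including those inside conditions) consist of a single fact with the unique matching property. *)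

theory Defs
  imports Main "HOL-Library.Multiset"
begin

text \<open>Value terms over variables (nat), constants of the domain 'v and
  domain operators 'g; Boolean terms with connectives, Boolean-valued
  equality and domain predicates 'p.  The algebra is given semantically by
  interpretations fi (operators) and pi (predicates); ground Bool terms
  therefore evaluate to true or false.\<close>

datatype ('g,'v) vt = Var nat | Const 'v | Fn 'g "('g,'v) vt list"

datatype ('g,'p,'v) bexp = BTrue | BFalse | BNot "('g,'p,'v) bexp"
  | BAnd "('g,'p,'v) bexp" "('g,'p,'v) bexp" | BOr "('g,'p,'v) bexp" "('g,'p,'v) bexp"
  | BEq "('g,'v) vt" "('g,'v) vt" | BPred 'p "('g,'v) vt list"

type_synonym 'v env = "nat \<Rightarrow> 'v option"

fun evalv :: "('g \<Rightarrow> 'v list \<Rightarrow> 'v) \<Rightarrow> 'v env \<Rightarrow> ('g,'v) vt \<Rightarrow> 'v" where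
  "evalv fi e (Var x) = (case e x of Some v \<Rightarrow> v | None \<Rightarrow> undefined)"
| "evalv fi e (Const c) = c"
| "evalv fi e (Fn g ts) = fi g (map (evalv fi e) ts)"

fun evalb :: "('g \<Rightarrow> 'v list \<Rightarrow> 'v) \<Rightarrow> ('p \<Rightarrow> 'v list \<Rightarrow> bool) \<Rightarrow> 'v env
    \<Rightarrow> ('g,'p,'v) bexp \<Rightarrow> bool" where
  "evalb fi pi e BTrue = True"
| "evalb fi pi e BFalse = False"
| "evalb fi pi e (BNot b) = (\<not> evalb fi pi e b)"
| "evalb fi pi e (BAnd b c) = (evalb fi pi e b \<and> evalb fi pi e c)"
| "evalb fi pi e (BOr b c) = (evalb fi pi e b \<or> evalb fi pi e c)"
| "evalb fi pi e (BEq s t) = (evalv fi e s = evalv fi e t)"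
| "evalb fi pi e (BPred p ts) = pi p (map (evalv fi e) ts)"

fun fvv :: "('g,'v) vt \<Rightarrow> nat set" where
  "fvv (Var x) = {x}"
| "fvv (Const c) = {}"
| "fvv (Fn g ts) = (\<Union>t\<in>set ts. fvv t)"

fun fvb :: "('g,'p,'v) bexp \<Rightarrow> nat set" where
  "fvb BTrue = {}"
| "fvb BFalse = {}"
| "fvb (BNot b) = fvb b"
| "fvb (BAnd b c) = fvb b \<union> fvb c"
| "fvb (BOr b c) = fvb b \<union> fvb c"
| "fvb (BEq s t) = fvv s \<union> fvv t"
| "fvb (BPred p ts) = (\<Union>t\<in>set ts. fvv t)"

section \<open>Relational algebra (positional, 1-based columns, set semantics)\<close>

datatype ('r,'g,'p,'v) ra = Rel 'r
  | Proj "nat list" "('r,'g,'p,'v) ra"          \<comment> \<open>\<pi>_{i1..ik}, indices 1-based\<close>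
  | Sel "('g,'p,'v) bexp" "('r,'g,'p,'v) ra"     \<comment> \<open>placeholder $i is Var i\<close>
  | Union "('r,'g,'p,'v) ra" "('r,'g,'p,'v) ra"
  | Prod "('r,'g,'p,'v) ra" "('r,'g,'p,'v) ra"
  | Diff "('r,'g,'p,'v) ra" "('r,'g,'p,'v) ra"

fun arity :: "('r \<Rightarrow> nat) \<Rightarrow> ('r,'g,'p,'v) ra \<Rightarrow> nat" where
  "arity ar (Rel r) = ar r"
| "arity ar (Proj is R) = length is"
| "arity ar (Sel \<phi> R) = arity ar R"
| "arity ar (Union R1 R2) = arity ar R1"
| "arity ar (Prod R1 R2) = arity ar R1 + arity ar R2"
| "arity ar (Diff R1 R2) = arity ar R1"

fun wf_ra :: "'r set \<Rightarrow> ('r \<Rightarrow> nat) \<Rightarrow> ('r,'g,'p,'v) ra \<Rightarrow> bool" where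
  "wf_ra S ar (Rel r) = (r \<in> S)"
| "wf_ra S ar (Proj is R) = (wf_ra S ar R \<and> (\<forall>i\<in>set is. 1 \<le> i \<and> i \<le> arity ar R))"
| "wf_ra S ar (Sel \<phi> R) = (wf_ra S ar R \<and> fvb \<phi> \<subseteq> {1..arity ar R})"
| "wf_ra S ar (Union R1 R2) = (wf_ra S ar R1 \<and> wf_ra S ar R2 \<and> arity ar R1 = arity ar R2)"
| "wf_ra S ar (Prod R1 R2) = (wf_ra S ar R1 \<and> wf_ra S ar R2)"
| "wf_ra S ar (Diff R1 R2) = (wf_ra S ar R1 \<and> wf_ra S ar R2 \<and> arity ar R1 = arity ar R2)"

definition tuple_env :: "'v list \<Rightarrow> 'v env" where
  "tuple_env t = (\<lambda>i. if 1 \<le> i \<and> i \<le> length t then Some (t ! (i - 1)) else None)"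

fun eval_ra :: "('g \<Rightarrow> 'v list \<Rightarrow> 'v) \<Rightarrow> ('p \<Rightarrow> 'v list \<Rightarrow> bool) \<Rightarrow> ('r \<Rightarrow> 'v list set)
    \<Rightarrow> ('r,'g,'p,'v) ra \<Rightarrow> 'v list set" where
  "eval_ra fi pi I (Rel r) = I r"
| "eval_ra fi pi I (Proj is R) = (\<lambda>t. map (\<lambda>i. t ! (i - 1)) is) ` eval_ra fi pi I R"
| "eval_ra fi pi I (Sel \<phi> R) = {t \<in> eval_ra fi pi I R. evalb fi pi (tuple_env t) \<phi>}"
| "eval_ra fi pi I (Union R1 R2) = eval_ra fi pi I R1 \<union> eval_ra fi pi I R2"
| "eval_ra fi pi I (Prod R1 R2) = {t @ u | t u. t \<in> eval_ra fi pi I R1 \<and> u \<in> eval_ra fi pi I R2}"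
| "eval_ra fi pi I (Diff R1 R2) = eval_ra fi pi I R1 - eval_ra fi pi I R2"

definition db_instance :: "'r set \<Rightarrow> ('r \<Rightarrow> nat) \<Rightarrow> ('r \<Rightarrow> 'v list set) \<Rightarrow> bool" where
  "db_instance S ar I = (\<forall>r\<in>S. finite (I r) \<and> (\<forall>t\<in>I r. length t = ar r))"

section \<open>Facts: one fact constructor R_R per RA expression R\<close>

datatype ('r,'g,'p,'v) gfact = GF "('r,'g,'p,'v) ra" "'v list"
datatype ('r,'g,'p,'v) fterm = FT "('r,'g,'p,'v) ra" "('g,'v) vt list"

fun inst :: "('g \<Rightarrow> 'v list \<Rightarrow> 'v) \<Rightarrow> 'v env \<Rightarrow> ('r,'g,'p,'v) fterm \<Rightarrow> ('r,'g,'p,'v) gfact" where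
  "inst fi e (FT R ts) = GF R (map (evalv fi e) ts)"

fun fvf :: "('r,'g,'p,'v) fterm \<Rightarrow> nat set" where
  "fvf (FT R ts) = (\<Union>t\<in>set ts. fvv t)"

definition trb :: "'r set \<Rightarrow> ('r \<Rightarrow> 'v list set) \<Rightarrow> ('r,'g,'p,'v) gfact multiset" where
  "trb S I = (\<Sum>r\<in>S. image_mset (GF (Rel r)) (mset_set (I r)))"

text \<open>A pattern is the pair (P_!, P_?) of wrapped multisets (P_! empty if absent).\<close>
type_synonym ('r,'g,'p,'v) pat = "('r,'g,'p,'v) fterm multiset \<times> ('r,'g,'p,'v) fterm multiset"

definition pvars :: "('r,'g,'p,'v) pat \<Rightarrow> nat set" where
  "pvars P = (\<Union>f\<in>set_mset (fst P + snd P). fvf f)"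

datatype ('r,'g,'p,'v) cond = CFalse | CB "('g,'p,'v) bexp" | CNot "('r,'g,'p,'v) cond"
  | COr "('r,'g,'p,'v) cond" "('r,'g,'p,'v) cond"
  | CEx "('r,'g,'p,'v) pat" "('r,'g,'p,'v) cond"

datatype ('r,'g,'p,'v) query = QEmpty | QFact "('r,'g,'p,'v) fterm"
  | QPlus "('r,'g,'p,'v) query" "('r,'g,'p,'v) query"
  | QImp "('r,'g,'p,'v) cond" "('r,'g,'p,'v) query"
  | QFrom "('r,'g,'p,'v) pat" "('r,'g,'p,'v) query"

fun closed_c :: "nat set \<Rightarrow> ('r,'g,'p,'v) cond \<Rightarrow> bool" where
  "closed_c B CFalse = True"
| "closed_c B (CB b) = (fvb b \<subseteq> B)"
| "closed_c B (CNot \<psi>) = closed_c B \<psi>"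
| "closed_c B (COr \<psi>1 \<psi>2) = (closed_c B \<psi>1 \<and> closed_c B \<psi>2)"
| "closed_c B (CEx P \<psi>) = closed_c (B \<union> pvars P) \<psi>"

fun closed_q :: "nat set \<Rightarrow> ('r,'g,'p,'v) query \<Rightarrow> bool" where
  "closed_q B QEmpty = True"
| "closed_q B (QFact f) = (fvf f \<subseteq> B)"
| "closed_q B (QPlus Q1 Q2) = (closed_q B Q1 \<and> closed_q B Q2)"
| "closed_q B (QImp \<phi> Q) = (closed_c B \<phi> \<and> closed_q B Q)"
| "closed_q B (QFrom P Q) = closed_q (B \<union> pvars P) Q"

definition closed_query :: "('r,'g,'p,'v) query \<Rightarrow> bool" where
  "closed_query Q = closed_q {} Q"

definition unique_matching :: "('g \<Rightarrow> 'v list \<Rightarrow> 'v) \<Rightarrow> ('r,'g,'p,'v) fterm \<Rightarrow> bool" where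
  "unique_matching fi t = (\<forall>t' \<sigma>1 \<sigma>2. dom \<sigma>1 = fvf t \<longrightarrow> dom \<sigma>2 = fvf t \<longrightarrow>
      inst fi \<sigma>1 t = t' \<longrightarrow> inst fi \<sigma>2 t = t' \<longrightarrow> \<sigma>1 = \<sigma>2)"

definition det_pat :: "('g \<Rightarrow> 'v list \<Rightarrow> 'v) \<Rightarrow> ('r,'g,'p,'v) pat \<Rightarrow> bool" where
  "det_pat fi P = (\<exists>f. P = ({#}, {#f#}) \<and> unique_matching fi f)"

fun det_c :: "('g \<Rightarrow> 'v list \<Rightarrow> 'v) \<Rightarrow> ('r,'g,'p,'v) cond \<Rightarrow> bool" where
  "det_c fi CFalse = True"
| "det_c fi (CB b) = True"
| "det_c fi (CNot \<psi>) = det_c fi \<psi>"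
| "det_c fi (COr \<psi>1 \<psi>2) = (det_c fi \<psi>1 \<and> det_c fi \<psi>2)"
| "det_c fi (CEx P \<psi>) = (det_pat fi P \<and> det_c fi \<psi>)"

fun det_q :: "('g \<Rightarrow> 'v list \<Rightarrow> 'v) \<Rightarrow> ('r,'g,'p,'v) query \<Rightarrow> bool" where
  "det_q fi QEmpty = True"
| "det_q fi (QFact f) = True"
| "det_q fi (QPlus Q1 Q2) = (det_q fi Q1 \<and> det_q fi Q2)"
| "det_q fi (QImp \<phi> Q) = (det_c fi \<phi> \<and> det_q fi Q)"
| "det_q fi (QFrom P Q) = (det_pat fi P \<and> det_q fi Q)"

section \<open>Operational semantics (stacks are lists with the TOP at the head)\<close>

definition match :: "('g \<Rightarrow> 'v list \<Rightarrow> 'v) \<Rightarrow> 'v env \<Rightarrow> ('r,'g,'p,'v) pat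
    \<Rightarrow> ('r,'g,'p,'v) gfact multiset \<Rightarrow> ('r,'g,'p,'v) gfact multiset \<Rightarrow> 'v env \<Rightarrow> bool" where
  "match fi a P F H e' = (a \<subseteq>\<^sub>m e' \<and> dom e' = dom a \<union> pvars P \<and>
      F = H + image_mset (inst fi e') (fst P + snd P))"

datatype ('r,'g,'p,'v) cframe = Res bool | NotF
  | CEv "'v env" "('r,'g,'p,'v) cond"
  | CDown "'v env" "('r,'g,'p,'v) cond"
  | CExF "('r,'g,'p,'v) gfact multiset" "'v env" "('r,'g,'p,'v) pat" "('r,'g,'p,'v) cond"

inductive cstep :: "('g \<Rightarrow> 'v list \<Rightarrow> 'v) \<Rightarrow> ('p \<Rightarrow> 'v list \<Rightarrow> bool)
    \<Rightarrow> ('r,'g,'p,'v) gfact multiset \<Rightarrow> ('r,'g,'p,'v) cframe list \<Rightarrow> ('r,'g,'p,'v) cframe list \<Rightarrow> bool"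
  for fi pi where
  c_false: "cstep fi pi F (CEv a CFalse # S) (Res False # S)"
| c_bool: "cstep fi pi F (CEv a (CB B) # S) (Res (evalb fi pi a B) # S)"
| c_not: "cstep fi pi F (CEv a (CNot \<psi>) # S) (CEv a \<psi> # NotF # S)"
| c_notres: "cstep fi pi F (Res b # NotF # S) (Res (\<not> b) # S)"
| c_or: "cstep fi pi F (CEv a (COr \<psi>1 \<psi>2) # S) (CEv a \<psi>2 # CDown a \<psi>1 # S)"
| c_down_true: "cstep fi pi F (Res True # CDown a \<psi> # S) (Res True # S)"
| c_down_false: "cstep fi pi F (Res False # CDown a \<psi> # S) (CEv a \<psi> # S)"
| c_ex: "cstep fi pi F (CEv a (CEx P \<psi>) # S) (CExF F a P \<psi> # S)"
| c_ex_match: "match fi a P F' H e' \<Longrightarrow>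
    cstep fi pi F (CExF F' a P \<psi> # S)
      (CEv e' \<psi> # CExF (H + image_mset (inst fi e') (fst P)) a P \<psi> # S)"
| c_ex_false: "cstep fi pi F (Res False # CExF F' a P \<psi> # S) (CExF F' a P \<psi> # S)"
| c_ex_true: "cstep fi pi F (Res True # CExF F' a P \<psi> # S) (Res True # S)"
| c_ex_none: "\<not> (\<exists>H e'. match fi a P F' H e') \<Longrightarrow>
    cstep fi pi F (CExF F' a P \<psi> # S) (Res False # S)"

datatype ('r,'g,'p,'v) qframe =
    QEv "'v env" "('r,'g,'p,'v) query"
  | QCondF "'v env" "('r,'g,'p,'v) cframe list" "('r,'g,'p,'v) query"
  | QFromF "('r,'g,'p,'v) gfact multiset" "'v env" "('r,'g,'p,'v) pat" "('r,'g,'p,'v) query"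

datatype ('r,'g,'p,'v) qstate =
    QS "('r,'g,'p,'v) gfact multiset" "('r,'g,'p,'v) gfact multiset" "('r,'g,'p,'v) qframe list"
  | Ans "('r,'g,'p,'v) gfact multiset"

inductive qstep :: "('g \<Rightarrow> 'v list \<Rightarrow> 'v) \<Rightarrow> ('p \<Rightarrow> 'v list \<Rightarrow> bool)
    \<Rightarrow> ('r,'g,'p,'v) qstate \<Rightarrow> ('r,'g,'p,'v) qstate \<Rightarrow> bool"
  for fi pi where
  q_fact: "qstep fi pi (QS F F' (QEv a (QFact f) # S)) (QS F (F' + {#inst fi a f#}) S)"
| q_empty: "qstep fi pi (QS F F' (QEv a QEmpty # S)) (QS F F' S)"
| q_plus: "qstep fi pi (QS F F' (QEv a (QPlus R1 R2) # S)) (QS F F' (QEv a R1 # QEv a R2 # S))"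
| q_imp: "qstep fi pi (QS F F' (QEv a (QImp \<phi> R) # S)) (QS F F' (QCondF a [CEv a \<phi>] R # S))"
| q_cond_false: "qstep fi pi (QS F F' (QCondF a [Res False] R # S)) (QS F F' S)"
| q_cond_true: "qstep fi pi (QS F F' (QCondF a [Res True] R # S)) (QS F F' (QEv a R # S))"
| q_cond_step: "cstep fi pi F S1 S2 \<Longrightarrow>
    qstep fi pi (QS F F' (QCondF a S1 R # S)) (QS F F' (QCondF a S2 R # S))"
| q_from: "qstep fi pi (QS F F' (QEv a (QFrom P R) # S)) (QS F F' (QFromF F a P R # S))"
| q_from_match: "match fi a P F'' H e' \<Longrightarrow>
    qstep fi pi (QS F F' (QFromF F'' a P R # S))
      (QS F F' (QEv e' R # QFromF (H + image_mset (inst fi e') (fst P)) a P R # S))"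
| q_from_none: "\<not> (\<exists>H e'. match fi a P F'' H e') \<Longrightarrow>
    qstep fi pi (QS F F' (QFromF F'' a P R # S)) (QS F F' S)"
| q_done: "qstep fi pi (QS F F' []) (Ans F')"

definition init_q :: "('r,'g,'p,'v) query \<Rightarrow> ('r,'g,'p,'v) gfact multiset \<Rightarrow> ('r,'g,'p,'v) qstate" where
  "init_q Q F = QS F {#} [QEv Map.empty Q]"

definition reduces_nf :: "('g \<Rightarrow> 'v list \<Rightarrow> 'v) \<Rightarrow> ('p \<Rightarrow> 'v list \<Rightarrow> bool)
    \<Rightarrow> ('r,'g,'p,'v) qstate \<Rightarrow> ('r,'g,'p,'v) qstate \<Rightarrow> bool" where
  "reduces_nf fi pi s t = ((qstep fi pi)\<^sup>*\<^sup>* s t \<and> \<not> (\<exists>u. qstep fi pi t u))"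

end

theory Submission
  imports Defs
begin

text \<open>Conditions and queries are given a denotational semantics: a condition denotes a truth
  value, a query the set of facts it produces, where From P ranges over all matches of P in the
  database. For deterministic queries the stack machine computes exactly this denotation: no step
  adds a fact outside the denotation of the current state, and every frame can be run to
  completion producing all facts of its denotation. The latter rests on the fact that a single
  fact pattern with the unique matching property enumerates each of its matches exactly once,
  consuming the matched fact.

  The expression R is translated in continuation-passing style over numbered variables: a base
  relation becomes a From pattern over fresh variables, projection and product rearrange the
  variables holding a tuple, selection becomes a guard, and difference a guard that negates the
  condition that the translation of the subtrahend, restricted to the current tuple, has an
  answer. By induction on R the translation denotes the facts R_R(t) with t in Eval_I(R).\<close>

lemma evalv_cong: "(\<And>x. x \<in> fvv t \<Longrightarrow> e1 x = e2 x) \<Longrightarrow> evalv fi e1 t = evalv fi e2 t"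
  by (induction t) (auto intro!: arg_cong[where f = "fi _"] map_cong)

lemma evalb_cong: "(\<And>x. x \<in> fvb b \<Longrightarrow> e1 x = e2 x) \<Longrightarrow> evalb fi pi e1 b = evalb fi pi e2 b"
proof (induction b)
  case (BEq s t)
  then show ?case using evalv_cong[of s e1 e2 fi] evalv_cong[of t e1 e2 fi] by simp
qed (auto intro!: arg_cong[where f = "pi _"] map_cong evalv_cong)

lemma inst_cong: "(\<And>x. x \<in> fvf f \<Longrightarrow> e1 x = e2 x) \<Longrightarrow> inst fi e1 f = inst fi e2 f"
  by (cases f) (auto intro!: evalv_cong)

fun rename_vt :: "(nat \<Rightarrow> nat) \<Rightarrow> ('g,'v) vt \<Rightarrow> ('g,'v) vt" where
  "rename_vt g (Var x) = Var (g x)"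
| "rename_vt g (Const c) = Const c"
| "rename_vt g (Fn h ts) = Fn h (map (rename_vt g) ts)"

fun rename_bexp :: "(nat \<Rightarrow> nat) \<Rightarrow> ('g,'p,'v) bexp \<Rightarrow> ('g,'p,'v) bexp" where
  "rename_bexp g BTrue = BTrue"
| "rename_bexp g BFalse = BFalse"
| "rename_bexp g (BNot b) = BNot (rename_bexp g b)"
| "rename_bexp g (BAnd b c) = BAnd (rename_bexp g b) (rename_bexp g c)"
| "rename_bexp g (BOr b c) = BOr (rename_bexp g b) (rename_bexp g c)"
| "rename_bexp g (BEq s t) = BEq (rename_vt g s) (rename_vt g t)"
| "rename_bexp g (BPred p ts) = BPred p (map (rename_vt g) ts)"

lemma evalv_rename_vt: "evalv fi e (rename_vt g s) = evalv fi (e \<circ> g) s"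
  by (induction s) (auto cong: map_cong)

lemma evalb_rename_bexp: "evalb fi pi e (rename_bexp g b) = evalb fi pi (e \<circ> g) b"
  by (induction b) (auto simp: evalv_rename_vt comp_def)

lemma fvv_rename_vt: "fvv (rename_vt g s) = g ` fvv s"
  by (induction s) auto

lemma fvb_rename_bexp: "fvb (rename_bexp g b) = g ` fvb b"
  by (induction b) (auto simp: fvv_rename_vt)

abbreviation vals :: "('g \<Rightarrow> 'v list \<Rightarrow> 'v) \<Rightarrow> 'v env \<Rightarrow> nat list \<Rightarrow> 'v list" where
  "vals fi e xs \<equiv> map (\<lambda>x. evalv fi e (Var x)) xs"

fun vars_eq :: "nat list \<Rightarrow> nat list \<Rightarrow> ('g,'p,'v) bexp" where
  "vars_eq (x # xs) (y # ys) = BAnd (BEq (Var x) (Var y)) (vars_eq xs ys)"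
| "vars_eq _ _ = BTrue"

lemma evalb_vars_eq:
  "length xs = length ys \<Longrightarrow> evalb fi pi e (vars_eq xs ys) = (vals fi e xs = vals fi e ys)"
  by (induction xs ys rule: vars_eq.induct) auto

lemma fvb_vars_eq: "fvb (vars_eq xs ys) \<subseteq> set xs \<union> set ys"
  by (induction xs ys rule: vars_eq.induct) auto

lemma vals_map_le: "e \<subseteq>\<^sub>m e' \<Longrightarrow> set xs \<subseteq> dom e \<Longrightarrow> vals fi e' xs = vals fi e xs"
  by (fastforce simp: map_le_def subset_eq)

section \<open>Matching single-fact patterns\<close>

lemma match_add: "match fi a P F H e \<Longrightarrow> match fi a P (F + Z) (H + Z) e"
  by (simp add: match_def ac_simps)

definition matches :: "('g \<Rightarrow> 'v list \<Rightarrow> 'v) \<Rightarrow> 'v env \<Rightarrow> ('r,'g,'p,'v) pat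
    \<Rightarrow> ('r,'g,'p,'v) gfact multiset \<Rightarrow> 'v env set" where
  "matches fi a P F = {e. \<exists>H. match fi a P F H e}"

lemma matches_mono: "matches fi a P F \<subseteq> matches fi a P (F + Z)"
  unfolding matches_def using match_add by blast

lemma det_pat_match:
  assumes "det_pat fi P" and "match fi a P F H e"
  obtains f where "P = ({#}, {#f#})" "unique_matching fi f" "F = add_mset (inst fi e f) H"
  using assms by (auto simp: det_pat_def match_def)

lemma unique_matching_match_eq:
  assumes u: "unique_matching fi f"
    and m1: "match fi a ({#}, {#f#}) F1 H1 e1" and m2: "match fi a ({#}, {#f#}) F2 H2 e2"
    and eq: "inst fi e1 f = inst fi e2 f"
  shows "e1 = e2"
proof
  have dom: "dom e1 = dom a \<union> fvf f" "dom e2 = dom a \<union> fvf f"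
    and le: "a \<subseteq>\<^sub>m e1" "a \<subseteq>\<^sub>m e2"
    using m1 m2 by (auto simp: match_def pvars_def)
  have "inst fi (e1 |` fvf f) f = inst fi e1 f" "inst fi (e2 |` fvf f) f = inst fi e2 f"
    by (auto intro: inst_cong)
  with eq have "inst fi (e1 |` fvf f) f = inst fi (e2 |` fvf f) f"
    by simp
  then have restr: "e1 |` fvf f = e2 |` fvf f"
    using u dom unfolding unique_matching_def by (metis Int_absorb1 dom_restrict sup.cobounded2)
  fix x
  show "e1 x = e2 x"
  proof (cases "x \<in> fvf f")
    case True
    then show ?thesis using restr by (metis restrict_in)
  next
    case False
    then show ?thesis using dom le unfolding map_le_def by (metis UnE domIff)
  qed
qed

lemma det_pat_match_split:
  assumes d: "det_pat fi P" and m1: "match fi a P F H1 e1" and m2: "match fi a P F H2 e2"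
  shows "e2 = e1 \<or> (\<exists>H. match fi a P H1 H e2)"
proof (cases "e2 = e1")
  case False
  obtain f where P: "P = ({#}, {#f#})" and u: "unique_matching fi f"
    and F1: "F = add_mset (inst fi e1 f) H1"
    using d m1 by (rule det_pat_match)
  have F2: "F = add_mset (inst fi e2 f) H2"
    using m2 P by (simp add: match_def)
  have "inst fi e2 f \<noteq> inst fi e1 f"
    using False unique_matching_match_eq[OF u] m1 m2 P by metis
  then have "inst fi e2 f \<in># H1"
    using F1 F2 by (metis insert_noteq_member)
  then have "match fi a P H1 (H1 - {#inst fi e2 f#}) e2"
    using m2 P by (auto simp: match_def)
  then show ?thesis by blast
qed simp

lemma det_pat_matches:
  assumes d: "det_pat fi P" and m: "match fi a P F H e"
  shows "matches fi a P F = insert e (matches fi a P H)"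
proof
  show "matches fi a P F \<subseteq> insert e (matches fi a P H)"
    using det_pat_match_split[OF d m] by (auto simp: matches_def)
  obtain f where F: "F = H + {#inst fi e f#}"
    using d m by (rule det_pat_match) simp
  have "matches fi a P H \<subseteq> matches fi a P (H + {#inst fi e f#})"
    by (rule matches_mono)
  moreover have "e \<in> matches fi a P F"
    using m by (auto simp: matches_def)
  ultimately show "insert e (matches fi a P H) \<subseteq> matches fi a P F"
    using F by simp
qed

section \<open>Denotational semantics and evaluation\<close>

fun cond_sem :: "('g \<Rightarrow> 'v list \<Rightarrow> 'v) \<Rightarrow> ('p \<Rightarrow> 'v list \<Rightarrow> bool) \<Rightarrow> ('r,'g,'p,'v) gfact multiset
    \<Rightarrow> 'v env \<Rightarrow> ('r,'g,'p,'v) cond \<Rightarrow> bool" where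
  "cond_sem fi pi F a CFalse = False"
| "cond_sem fi pi F a (CB b) = evalb fi pi a b"
| "cond_sem fi pi F a (CNot \<psi>) = (\<not> cond_sem fi pi F a \<psi>)"
| "cond_sem fi pi F a (COr \<psi>1 \<psi>2) = (cond_sem fi pi F a \<psi>1 \<or> cond_sem fi pi F a \<psi>2)"
| "cond_sem fi pi F a (CEx P \<psi>) = (\<exists>e\<in>matches fi a P F. cond_sem fi pi F e \<psi>)"

text \<open>The truth value a condition stack delivers once the frame on top of it has produced b.\<close>

fun cont_val :: "('g \<Rightarrow> 'v list \<Rightarrow> 'v) \<Rightarrow> ('p \<Rightarrow> 'v list \<Rightarrow> bool) \<Rightarrow> ('r,'g,'p,'v) gfact multiset
    \<Rightarrow> ('r,'g,'p,'v) cframe list \<Rightarrow> bool \<Rightarrow> bool" where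
  "cont_val fi pi F [] b = b"
| "cont_val fi pi F (NotF # S) b = cont_val fi pi F S (\<not> b)"
| "cont_val fi pi F (CDown a \<psi> # S) b = cont_val fi pi F S (b \<or> cond_sem fi pi F a \<psi>)"
| "cont_val fi pi F (CExF F' a P \<psi> # S) b =
     cont_val fi pi F S (b \<or> (\<exists>e\<in>matches fi a P F'. cond_sem fi pi F e \<psi>))"
| "cont_val fi pi F (Res c # S) b = cont_val fi pi F S b"
| "cont_val fi pi F (CEv a \<psi> # S) b = cont_val fi pi F S b"

fun cstack_val :: "('g \<Rightarrow> 'v list \<Rightarrow> 'v) \<Rightarrow> ('p \<Rightarrow> 'v list \<Rightarrow> bool) \<Rightarrow> ('r,'g,'p,'v) gfact multiset
    \<Rightarrow> ('r,'g,'p,'v) cframe list \<Rightarrow> bool" where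
  "cstack_val fi pi F (Res b # S) = cont_val fi pi F S b"
| "cstack_val fi pi F (CEv a \<psi> # S) = cont_val fi pi F S (cond_sem fi pi F a \<psi>)"
| "cstack_val fi pi F (CExF F' a P \<psi> # S) =
     cont_val fi pi F S (\<exists>e\<in>matches fi a P F'. cond_sem fi pi F e \<psi>)"
| "cstack_val fi pi F _ = False"

fun det_cframe :: "('g \<Rightarrow> 'v list \<Rightarrow> 'v) \<Rightarrow> ('r,'g,'p,'v) cframe \<Rightarrow> bool" where
  "det_cframe fi (CEv a \<psi>) = det_c fi \<psi>"
| "det_cframe fi (CDown a \<psi>) = det_c fi \<psi>"
| "det_cframe fi (CExF F' a P \<psi>) = (det_pat fi P \<and> det_c fi \<psi>)"
| "det_cframe fi _ = True"

lemma cstep_preserves_cstack_val: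
  assumes "cstep fi pi F S1 S2" and "list_all (det_cframe fi) S1"
  shows "cstack_val fi pi F S2 = cstack_val fi pi F S1 \<and> list_all (det_cframe fi) S2"
  using assms
proof (induction rule: cstep.induct)
  case (c_ex_match a P F' H e F \<psi> S)
  then have d: "det_pat fi P" by simp
  obtain f where "P = ({#}, {#f#})"
    using d c_ex_match(1) by (rule det_pat_match)
  then show ?case
    using c_ex_match det_pat_matches[OF d c_ex_match(1)] by auto
qed (auto simp: matches_def disj_commute)

lemma ex_frame_evaluates:
  assumes d: "det_pat fi P"
    and IH: "\<And>e S. (cstep fi pi F)\<^sup>*\<^sup>* (CEv e \<psi> # S) (Res (cond_sem fi pi F e \<psi>) # S)"
  shows "(cstep fi pi F)\<^sup>*\<^sup>* (CExF F' a P \<psi> # S)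
    (Res (\<exists>e\<in>matches fi a P F'. cond_sem fi pi F e \<psi>) # S)"
proof (induction "size F'" arbitrary: F' rule: less_induct)
  case less
  show ?case
  proof (cases "\<exists>H e. match fi a P F' H e")
    case False
    then have "cstep fi pi F (CExF F' a P \<psi> # S) (Res False # S)" by (rule c_ex_none)
    then show ?thesis using False by (auto simp: matches_def)
  next
    case True
    then obtain H e where m: "match fi a P F' H e" by blast
    obtain f where P: "P = ({#}, {#f#})" and F': "F' = add_mset (inst fi e f) H"
      using d m by (rule det_pat_match)
    have "cstep fi pi F (CExF F' a P \<psi> # S) (CEv e \<psi> # CExF H a P \<psi> # S)"
      using c_ex_match[OF m, of pi F \<psi> S] P by simp
    also have "(cstep fi pi F)\<^sup>*\<^sup>* \<dots> (Res (cond_sem fi pi F e \<psi>) # CExF H a P \<psi> # S)"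
      by (rule IH)
    also have "(cstep fi pi F)\<^sup>*\<^sup>* \<dots> (Res (\<exists>e\<in>matches fi a P F'. cond_sem fi pi F e \<psi>) # S)"
    proof (cases "cond_sem fi pi F e \<psi>")
      case True
      then show ?thesis using det_pat_matches[OF d m] by (simp add: c_ex_true r_into_rtranclp)
    next
      case False
      have "cstep fi pi F (Res False # CExF H a P \<psi> # S) (CExF H a P \<psi> # S)"
        by (rule c_ex_false)
      also have "(cstep fi pi F)\<^sup>*\<^sup>* \<dots> (Res (\<exists>e\<in>matches fi a P H. cond_sem fi pi F e \<psi>) # S)"
        using F' by (intro less) simp
      finally show ?thesis using det_pat_matches[OF d m] False by simp
    qed
    finally show ?thesis .
  qed
qed

lemma cond_evaluates:
  "det_c fi \<psi> \<Longrightarrow> (cstep fi pi F)\<^sup>*\<^sup>* (CEv a \<psi> # S) (Res (cond_sem fi pi F a \<psi>) # S)"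
proof (induction \<psi> arbitrary: a S)
  case (CNot \<psi>)
  have "cstep fi pi F (CEv a (CNot \<psi>) # S) (CEv a \<psi> # NotF # S)" by (rule c_not)
  also have "(cstep fi pi F)\<^sup>*\<^sup>* \<dots> (Res (cond_sem fi pi F a \<psi>) # NotF # S)"
    using CNot by simp
  also have "cstep fi pi F \<dots> (Res (cond_sem fi pi F a (CNot \<psi>)) # S)"
    by (simp add: c_notres)
  finally show ?case .
next
  case (COr \<psi>1 \<psi>2)
  have "cstep fi pi F (CEv a (COr \<psi>1 \<psi>2) # S) (CEv a \<psi>2 # CDown a \<psi>1 # S)" by (rule c_or)
  also have "(cstep fi pi F)\<^sup>*\<^sup>* \<dots> (Res (cond_sem fi pi F a \<psi>2) # CDown a \<psi>1 # S)"
    using COr by simp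
  also have "(cstep fi pi F)\<^sup>*\<^sup>* \<dots> (Res (cond_sem fi pi F a (COr \<psi>1 \<psi>2)) # S)"
  proof (cases "cond_sem fi pi F a \<psi>2")
    case True
    then show ?thesis by (simp add: c_down_true r_into_rtranclp)
  next
    case False
    have "cstep fi pi F (Res False # CDown a \<psi>1 # S) (CEv a \<psi>1 # S)" by (rule c_down_false)
    also have "(cstep fi pi F)\<^sup>*\<^sup>* \<dots> (Res (cond_sem fi pi F a \<psi>1) # S)"
      using COr by simp
    finally show ?thesis using False by simp
  qed
  finally show ?case .
next
  case (CEx P \<psi>)
  have "cstep fi pi F (CEv a (CEx P \<psi>) # S) (CExF F a P \<psi> # S)" by (rule c_ex)
  also have "(cstep fi pi F)\<^sup>*\<^sup>* \<dots> (Res (\<exists>e\<in>matches fi a P F. cond_sem fi pi F e \<psi>) # S)"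
    using CEx by (intro ex_frame_evaluates) auto
  finally show ?case by simp
qed (auto intro: r_into_rtranclp c_false c_bool)

fun query_sem :: "('g \<Rightarrow> 'v list \<Rightarrow> 'v) \<Rightarrow> ('p \<Rightarrow> 'v list \<Rightarrow> bool) \<Rightarrow> ('r,'g,'p,'v) gfact multiset
    \<Rightarrow> 'v env \<Rightarrow> ('r,'g,'p,'v) query \<Rightarrow> ('r,'g,'p,'v) gfact set" where
  "query_sem fi pi F a QEmpty = {}"
| "query_sem fi pi F a (QFact f) = {inst fi a f}"
| "query_sem fi pi F a (QPlus Q1 Q2) = query_sem fi pi F a Q1 \<union> query_sem fi pi F a Q2"
| "query_sem fi pi F a (QImp \<phi> Q) = (if cond_sem fi pi F a \<phi> then query_sem fi pi F a Q else {})"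
| "query_sem fi pi F a (QFrom P Q) = (\<Union>e\<in>matches fi a P F. query_sem fi pi F e Q)"

fun qframe_sem :: "('g \<Rightarrow> 'v list \<Rightarrow> 'v) \<Rightarrow> ('p \<Rightarrow> 'v list \<Rightarrow> bool) \<Rightarrow> ('r,'g,'p,'v) gfact multiset
    \<Rightarrow> ('r,'g,'p,'v) qframe \<Rightarrow> ('r,'g,'p,'v) gfact set" where
  "qframe_sem fi pi F (QEv a Q) = query_sem fi pi F a Q"
| "qframe_sem fi pi F (QCondF a S Q) = (if cstack_val fi pi F S then query_sem fi pi F a Q else {})"
| "qframe_sem fi pi F (QFromF F' a P Q) = (\<Union>e\<in>matches fi a P F'. query_sem fi pi F e Q)"

fun qstate_sem :: "('g \<Rightarrow> 'v list \<Rightarrow> 'v) \<Rightarrow> ('p \<Rightarrow> 'v list \<Rightarrow> bool)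
    \<Rightarrow> ('r,'g,'p,'v) qstate \<Rightarrow> ('r,'g,'p,'v) gfact set" where
  "qstate_sem fi pi (QS F F' S) = set_mset F' \<union> (\<Union>x\<in>set S. qframe_sem fi pi F x)"
| "qstate_sem fi pi (Ans F') = set_mset F'"

fun det_qframe :: "('g \<Rightarrow> 'v list \<Rightarrow> 'v) \<Rightarrow> ('r,'g,'p,'v) qframe \<Rightarrow> bool" where
  "det_qframe fi (QEv a Q) = det_q fi Q"
| "det_qframe fi (QCondF a S Q) = (list_all (det_cframe fi) S \<and> det_q fi Q)"
| "det_qframe fi (QFromF F' a P Q) = det_q fi Q"

fun det_qstate :: "('g \<Rightarrow> 'v list \<Rightarrow> 'v) \<Rightarrow> ('r,'g,'p,'v) qstate \<Rightarrow> bool" where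
  "det_qstate fi (QS F F' S) = list_all (det_qframe fi) S"
| "det_qstate fi (Ans F') = True"

lemma qstep_sound:
  assumes "qstep fi pi s1 s2" and "det_qstate fi s1"
  shows "qstate_sem fi pi s2 \<subseteq> qstate_sem fi pi s1 \<and> det_qstate fi s2"
  using assms
proof (induction rule: qstep.induct)
  case (q_cond_step F S1 S2 F' a Q S)
  then show ?case using cstep_preserves_cstack_val[OF q_cond_step(1)] by auto
next
  case (q_from_match a P F'' H e F F' Q S)
  have "e \<in> matches fi a P F''"
    using q_from_match(1) by (auto simp: matches_def)
  moreover have "F'' = H + image_mset (inst fi e) (fst P) + image_mset (inst fi e) (snd P)"
    using q_from_match(1) by (simp add: match_def)
  then have "matches fi a P (H + image_mset (inst fi e) (fst P)) \<subseteq> matches fi a P F''"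
    by (metis matches_mono)
  ultimately show ?case using q_from_match by fastforce
qed (auto simp: matches_def)

lemma qsteps_sound:
  assumes "(qstep fi pi)\<^sup>*\<^sup>* s1 s2" and "det_qstate fi s1"
  shows "qstate_sem fi pi s2 \<subseteq> qstate_sem fi pi s1 \<and> det_qstate fi s2"
  using assms by (induction rule: rtranclp_induct) (auto dest: qstep_sound)

lemma csteps_in_qcond:
  "(cstep fi pi F)\<^sup>*\<^sup>* S1 S2 \<Longrightarrow>
   (qstep fi pi)\<^sup>*\<^sup>* (QS F F' (QCondF a S1 Q # S)) (QS F F' (QCondF a S2 Q # S))"
  by (induction rule: rtranclp_induct) (auto intro: q_cond_step rtranclp.rtrancl_into_rtrancl)

lemma imp_frame_evaluates:
  assumes "det_c fi \<phi>"
  shows "(qstep fi pi)\<^sup>*\<^sup>* (QS F F' (QEv a (QImp \<phi> Q) # S))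
    (QS F F' (if cond_sem fi pi F a \<phi> then QEv a Q # S else S))"
proof -
  have "qstep fi pi (QS F F' (QEv a (QImp \<phi> Q) # S)) (QS F F' (QCondF a [CEv a \<phi>] Q # S))"
    by (rule q_imp)
  also have "(qstep fi pi)\<^sup>*\<^sup>* \<dots> (QS F F' (QCondF a [Res (cond_sem fi pi F a \<phi>)] Q # S))"
    using assms cond_evaluates[of fi \<phi> pi F a "[]"] by (intro csteps_in_qcond) simp
  also have "qstep fi pi \<dots> (QS F F' (if cond_sem fi pi F a \<phi> then QEv a Q # S else S))"
    by (cases "cond_sem fi pi F a \<phi>") (simp_all add: q_cond_true q_cond_false)
  finally show ?thesis .
qed

lemma from_frame_evaluates:
  assumes d: "det_pat fi P"
    and IH: "\<And>e F' S. \<exists>M. (qstep fi pi)\<^sup>*\<^sup>* (QS F F' (QEv e Q # S)) (QS F (F' + M) S)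
              \<and> query_sem fi pi F e Q \<subseteq> set_mset M"
  shows "\<exists>M. (qstep fi pi)\<^sup>*\<^sup>* (QS F F' (QFromF F'' a P Q # S)) (QS F (F' + M) S)
              \<and> (\<Union>e\<in>matches fi a P F''. query_sem fi pi F e Q) \<subseteq> set_mset M"
proof (induction "size F''" arbitrary: F'' F' rule: less_induct)
  case less
  show ?case
  proof (cases "\<exists>H e. match fi a P F'' H e")
    case False
    then have "qstep fi pi (QS F F' (QFromF F'' a P Q # S)) (QS F F' S)" by (rule q_from_none)
    then show ?thesis using False by (intro exI[of _ "{#}"]) (auto simp: matches_def)
  next
    case True
    then obtain H e where m: "match fi a P F'' H e" by blast
    obtain f where P: "P = ({#}, {#f#})" and F'': "F'' = add_mset (inst fi e f) H"
      using d m by (rule det_pat_match)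
    obtain M1 where run1: "(qstep fi pi)\<^sup>*\<^sup>* (QS F F' (QEv e Q # QFromF H a P Q # S))
        (QS F (F' + M1) (QFromF H a P Q # S))" and M1: "query_sem fi pi F e Q \<subseteq> set_mset M1"
      using IH by blast
    have "size H < size F''"
      using F'' by simp
    then obtain M2 where run2: "(qstep fi pi)\<^sup>*\<^sup>* (QS F (F' + M1) (QFromF H a P Q # S))
        (QS F (F' + M1 + M2) S)" and M2: "(\<Union>e\<in>matches fi a P H. query_sem fi pi F e Q) \<subseteq> set_mset M2"
      using less by blast
    have "qstep fi pi (QS F F' (QFromF F'' a P Q # S)) (QS F F' (QEv e Q # QFromF H a P Q # S))"
      using q_from_match[OF m, of pi F F' Q S] P by simp
    also note run1
    also note run2
    finally have "(qstep fi pi)\<^sup>*\<^sup>* (QS F F' (QFromF F'' a P Q # S)) (QS F (F' + (M1 + M2)) S)"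
      by (simp add: ac_simps)
    moreover have "matches fi a P F'' = insert e (matches fi a P H)"
      using d m by (rule det_pat_matches)
    then have "(\<Union>e\<in>matches fi a P F''. query_sem fi pi F e Q) \<subseteq> set_mset (M1 + M2)"
      using M1 M2 by auto
    ultimately show ?thesis by blast
  qed
qed

lemma query_evaluates:
  "det_q fi Q \<Longrightarrow> \<exists>M. (qstep fi pi)\<^sup>*\<^sup>* (QS F F' (QEv a Q # S)) (QS F (F' + M) S)
      \<and> query_sem fi pi F a Q \<subseteq> set_mset M"
proof (induction Q arbitrary: a F' S)
  case QEmpty
  show ?case using q_empty[of fi pi F F' a S] by (intro exI[of _ "{#}"]) auto
next
  case (QFact f)
  show ?case using q_fact[of fi pi F F' a f S] by (intro exI[of _ "{#inst fi a f#}"]) auto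
next
  case (QPlus Q1 Q2)
  obtain M1 where run1: "(qstep fi pi)\<^sup>*\<^sup>* (QS F F' (QEv a Q1 # QEv a Q2 # S)) (QS F (F' + M1) (QEv a Q2 # S))"
    and M1: "query_sem fi pi F a Q1 \<subseteq> set_mset M1" using QPlus by fastforce
  obtain M2 where run2: "(qstep fi pi)\<^sup>*\<^sup>* (QS F (F' + M1) (QEv a Q2 # S)) (QS F (F' + M1 + M2) S)"
    and M2: "query_sem fi pi F a Q2 \<subseteq> set_mset M2" using QPlus by fastforce
  have "qstep fi pi (QS F F' (QEv a (QPlus Q1 Q2) # S)) (QS F F' (QEv a Q1 # QEv a Q2 # S))"
    by (rule q_plus)
  also note run1
  also note run2
  finally show ?case using M1 M2 by (intro exI[of _ "M1 + M2"]) (auto simp: ac_simps)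
next
  case (QImp \<phi> Q)
  then have run: "(qstep fi pi)\<^sup>*\<^sup>* (QS F F' (QEv a (QImp \<phi> Q) # S))
      (QS F F' (if cond_sem fi pi F a \<phi> then QEv a Q # S else S))"
    by (intro imp_frame_evaluates) simp
  show ?case
  proof (cases "cond_sem fi pi F a \<phi>")
    case True
    have "\<exists>M. (qstep fi pi)\<^sup>*\<^sup>* (QS F F' (QEv a Q # S)) (QS F (F' + M) S)
        \<and> query_sem fi pi F a Q \<subseteq> set_mset M"
      using QImp by simp
    with run True show ?thesis
      by (auto intro: rtranclp_trans)
  next
    case False
    with run show ?thesis
      by (intro exI[of _ "{#}"]) auto
  qed
next
  case (QFrom P Q)
  then have "det_pat fi P" "det_q fi Q" by auto
  then obtain M where run: "(qstep fi pi)\<^sup>*\<^sup>* (QS F F' (QFromF F a P Q # S)) (QS F (F' + M) S)"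
    and M: "(\<Union>e\<in>matches fi a P F. query_sem fi pi F e Q) \<subseteq> set_mset M"
    using from_frame_evaluates[of fi P pi F Q] QFrom.IH by blast
  have "qstep fi pi (QS F F' (QEv a (QFrom P Q) # S)) (QS F F' (QFromF F a P Q # S))"
    by (rule q_from)
  also note run
  finally show ?case using M by auto
qed

lemma ans_normal_form: "\<not> qstep fi pi (Ans F) s"
  by (auto elim: qstep.cases)

lemma det_query_answer_iff:
  assumes "det_q fi Q"
  shows "(\<exists>F'. reduces_nf fi pi (init_q Q F) (Ans (F' + {#x#}))) \<longleftrightarrow> x \<in> query_sem fi pi F Map.empty Q"
proof
  assume "\<exists>F'. reduces_nf fi pi (init_q Q F) (Ans (F' + {#x#}))"
  then obtain F' where run: "(qstep fi pi)\<^sup>*\<^sup>* (init_q Q F) (Ans (F' + {#x#}))"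
    by (auto simp: reduces_nf_def)
  have "det_qstate fi (init_q Q F)"
    using assms by (simp add: init_q_def)
  with run have "qstate_sem fi pi (Ans (F' + {#x#})) \<subseteq> qstate_sem fi pi (init_q Q F)"
    by (blast dest: qsteps_sound)
  then show "x \<in> query_sem fi pi F Map.empty Q"
    by (simp add: init_q_def)
next
  assume x: "x \<in> query_sem fi pi F Map.empty Q"
  obtain M where "(qstep fi pi)\<^sup>*\<^sup>* (init_q Q F) (QS F M [])"
    and M: "query_sem fi pi F Map.empty Q \<subseteq> set_mset M"
    using query_evaluates[OF assms, of pi F "{#}" Map.empty "[]"] by (auto simp: init_q_def)
  then have "(qstep fi pi)\<^sup>*\<^sup>* (init_q Q F) (Ans M)"
    by (auto intro: rtranclp.rtrancl_into_rtrancl q_done)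
  moreover have "M = M - {#x#} + {#x#}"
    using x M by auto
  ultimately have "reduces_nf fi pi (init_q Q F) (Ans (M - {#x#} + {#x#}))"
    by (metis reduces_nf_def ans_normal_form)
  then show "\<exists>F'. reduces_nf fi pi (init_q Q F) (Ans (F' + {#x#}))" ..
qed

section \<open>Translation of relational algebra\<close>

definition rel_pattern :: "'r \<Rightarrow> nat list \<Rightarrow> ('r,'g,'p,'v) pat" where
  "rel_pattern r xs = ({#}, {#FT (Rel r) (map Var xs)#})"

definition emit :: "('r,'g,'p,'v) ra \<Rightarrow> nat list \<Rightarrow> nat \<Rightarrow> ('r,'g,'p,'v) query" where
  "emit R xs m = QFact (FT R (map Var xs))"

definition cond_and :: "('r,'g,'p,'v) cond \<Rightarrow> ('r,'g,'p,'v) cond \<Rightarrow> ('r,'g,'p,'v) cond" where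
  "cond_and \<psi>1 \<psi>2 = CNot (COr (CNot \<psi>1) (CNot \<psi>2))"

fun has_answer :: "('r,'g,'p,'v) query \<Rightarrow> ('r,'g,'p,'v) cond" where
  "has_answer QEmpty = CFalse"
| "has_answer (QFact f) = CNot CFalse"
| "has_answer (QPlus Q1 Q2) = COr (has_answer Q1) (has_answer Q2)"
| "has_answer (QImp \<phi> Q) = cond_and \<phi> (has_answer Q)"
| "has_answer (QFrom P Q) = CEx P (has_answer Q)"

lemma cond_sem_has_answer: "cond_sem fi pi F a (has_answer Q) \<longleftrightarrow> query_sem fi pi F a Q \<noteq> {}"
  by (induction Q arbitrary: a) (auto simp: cond_and_def matches_def)

lemma closed_has_answer: "closed_q B Q \<Longrightarrow> closed_c B (has_answer Q)"
  by (induction Q arbitrary: B) (auto simp: cond_and_def)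

lemma det_has_answer: "det_c fi (has_answer Q) = det_q fi Q"
  by (induction Q) (auto simp: cond_and_def)

abbreviation column :: "'a list \<Rightarrow> nat \<Rightarrow> 'a" where
  "column xs i \<equiv> xs ! (i - 1)"

text \<open>Variables are natural numbers: n is the first variable not yet in use, and the
  continuation k receives the variables holding a tuple of R together with the next unused one.\<close>

fun tr :: "('r \<Rightarrow> nat) \<Rightarrow> ('r,'g,'p,'v) ra \<Rightarrow> nat \<Rightarrow> (nat list \<Rightarrow> nat \<Rightarrow> ('r,'g,'p,'v) query)
    \<Rightarrow> ('r,'g,'p,'v) query" where
  "tr ar (Rel r) n k = QFrom (rel_pattern r [n..<n + ar r]) (k [n..<n + ar r] (n + ar r))"
| "tr ar (Proj is R) n k = tr ar R n (\<lambda>xs. k (map (column xs) is))"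
| "tr ar (Sel \<phi> R) n k = tr ar R n (\<lambda>xs m. QImp (CB (rename_bexp (column xs) \<phi>)) (k xs m))"
| "tr ar (Union R1 R2) n k = QPlus (tr ar R1 n k) (tr ar R2 n k)"
| "tr ar (Prod R1 R2) n k = tr ar R1 n (\<lambda>xs m. tr ar R2 m (\<lambda>ys. k (xs @ ys)))"
| "tr ar (Diff R1 R2) n k = tr ar R1 n (\<lambda>xs m.
     QImp (CNot (has_answer (tr ar R2 m (\<lambda>ys m'. QImp (CB (vars_eq xs ys)) (emit R2 ys m')))))
       (k xs m))"

definition translate :: "('r \<Rightarrow> nat) \<Rightarrow> ('r,'g,'p,'v) ra \<Rightarrow> ('r,'g,'p,'v) query" where
  "translate ar R = tr ar R 0 (emit R)"

lemma unique_matching_vars: "unique_matching fi (FT R (map Var xs))"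
  unfolding unique_matching_def
proof (intro allI impI ext)
  fix t \<sigma>1 \<sigma>2 x
  assume "dom \<sigma>1 = fvf (FT R (map Var xs))" "dom \<sigma>2 = fvf (FT R (map Var xs))"
    and "inst fi \<sigma>1 (FT R (map Var xs)) = t" "inst fi \<sigma>2 (FT R (map Var xs)) = t"
  then have dom: "dom \<sigma>1 = set xs" "dom \<sigma>2 = set xs"
    and "inst fi \<sigma>1 (FT R (map Var xs)) = inst fi \<sigma>2 (FT R (map Var xs))"
    by auto
  then have "vals fi \<sigma>1 xs = vals fi \<sigma>2 xs"
    by (simp add: comp_def)
  show "\<sigma>1 x = \<sigma>2 x"
  proof (cases "x \<in> set xs")
    case True
    then obtain v1 v2 where "\<sigma>1 x = Some v1" "\<sigma>2 x = Some v2"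
      using dom by blast
    with True \<open>vals fi \<sigma>1 xs = vals fi \<sigma>2 xs\<close> show ?thesis
      by (fastforce simp: map_eq_conv)
  next
    case False
    then show ?thesis using dom by (metis domIff)
  qed
qed

lemma det_pat_rel_pattern: "det_pat fi (rel_pattern r xs)"
  unfolding det_pat_def rel_pattern_def using unique_matching_vars by blast

lemma pvars_rel_pattern [simp]: "pvars (rel_pattern r xs) = set xs"
  by (auto simp: pvars_def rel_pattern_def)

lemma det_tr: "(\<And>xs m. det_q fi (k xs m)) \<Longrightarrow> det_q fi (tr ar R n k)"
  by (induction ar R n k rule: tr.induct) (simp_all add: det_pat_rel_pattern det_has_answer emit_def)

lemma closed_tr:
  "wf_ra S ar R \<Longrightarrow>
   (\<And>xs m B'. B \<subseteq> B' \<Longrightarrow> set xs \<subseteq> B' \<Longrightarrow> length xs = arity ar R \<Longrightarrow> closed_q B' (k xs m)) \<Longrightarrow>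
   closed_q B (tr ar R n k)"
proof (induction R arbitrary: B n k)
  case (Proj "is" R)
  show ?case unfolding tr.simps
  proof (rule Proj.IH)
    fix xs m B' assume "B \<subseteq> B'" "set xs \<subseteq> B'" "length xs = arity ar R"
    moreover from this have "set (map (column xs) is) \<subseteq> B'"
      using Proj.prems(1) by force
    ultimately show "closed_q B' (k (map (column xs) is) m)"
      by (intro Proj.prems(2)) auto
  qed (use Proj.prems in simp)
next
  case (Sel \<phi> R)
  show ?case unfolding tr.simps
  proof (rule Sel.IH)
    fix xs m B' assume "B \<subseteq> B'" "set xs \<subseteq> B'" "length xs = arity ar R"
    moreover from this have "fvb (rename_bexp (column xs) \<phi>) \<subseteq> B'"
      using Sel.prems(1) by (force simp: fvb_rename_bexp)
    ultimately show "closed_q B' (QImp (CB (rename_bexp (column xs) \<phi>)) (k xs m))"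
      using Sel.prems(2) by simp
  qed (use Sel.prems in simp)
next
  case (Prod R1 R2)
  show ?case unfolding tr.simps
  proof (rule Prod.IH(1))
    fix xs m B' assume "B \<subseteq> B'" "set xs \<subseteq> B'" "length xs = arity ar R1"
    then show "closed_q B' (tr ar R2 m (\<lambda>ys. k (xs @ ys)))"
      using Prod.prems by (intro Prod.IH(2)) auto
  qed (use Prod.prems in simp)
next
  case (Diff R1 R2)
  show ?case unfolding tr.simps
  proof (rule Diff.IH(1))
    fix xs m B' assume "B \<subseteq> B'" "set xs \<subseteq> B'" "length xs = arity ar R1"
    moreover have "closed_q B' (tr ar R2 m (\<lambda>ys m'. QImp (CB (vars_eq xs ys)) (emit R2 ys m')))"
    proof (rule Diff.IH(2))
      fix ys m' B'' assume "B' \<subseteq> B''" "set ys \<subseteq> B''"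
      with \<open>set xs \<subseteq> B'\<close> show "closed_q B'' (QImp (CB (vars_eq xs ys)) (emit R2 ys m'))"
        using fvb_vars_eq[of xs ys] by (auto simp: emit_def)
    qed (use Diff.prems in simp)
    ultimately show "closed_q B' (QImp (CNot (has_answer
        (tr ar R2 m (\<lambda>ys m'. QImp (CB (vars_eq xs ys)) (emit R2 ys m'))))) (k xs m))"
      using Diff.prems(2) by (simp add: closed_has_answer)
  qed (use Diff.prems in simp)
qed auto

lemma closed_translate: "wf_ra S ar R \<Longrightarrow> closed_query (translate ar R)"
  unfolding closed_query_def translate_def by (rule closed_tr) (auto simp: emit_def)

lemma det_translate: "det_q fi (translate ar R)"
  unfolding translate_def by (rule det_tr) (simp add: emit_def)

section \<open>Correctness of the translation\<close>

definition encodes :: "'r set \<Rightarrow> ('r \<Rightarrow> nat) \<Rightarrow> ('r,'g,'p,'v) gfact multiset \<Rightarrow> ('r \<Rightarrow> 'v list set)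
    \<Rightarrow> bool" where
  "encodes S ar F I = (\<forall>r\<in>S. \<forall>u. GF (Rel r) u \<in># F \<and> length u = ar r \<longleftrightarrow> u \<in> I r)"

lemma encodes_trb: "finite S \<Longrightarrow> db_instance S ar I \<Longrightarrow> encodes S ar (trb S I) I"
  by (auto simp: encodes_def trb_def db_instance_def set_mset_sum)

definition extend_env :: "'v env \<Rightarrow> nat \<Rightarrow> 'v list \<Rightarrow> 'v env" where
  "extend_env a n u = (\<lambda>x. if n \<le> x \<and> x < n + length u then Some (u ! (x - n)) else a x)"

lemma extend_env:
  assumes "dom a \<subseteq> {..<n}"
  shows "a \<subseteq>\<^sub>m extend_env a n u" and "dom (extend_env a n u) = dom a \<union> {n..<n + length u}"
    and "vals fi (extend_env a n u) [n..<n + length u] = u"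
  using assms by (auto simp: map_le_def extend_env_def intro: nth_equalityI split: if_splits)

lemma eq_extend_env:
  assumes "a \<subseteq>\<^sub>m e" and "dom e = dom a \<union> {n..<n + k}" and "dom a \<subseteq> {..<n}"
  shows "e = extend_env a n (vals fi e [n..<n + k])"
proof
  fix x
  show "e x = extend_env a n (vals fi e [n..<n + k]) x"
  proof (cases "n \<le> x \<and> x < n + k")
    case True
    then have "x \<in> dom e"
      using assms(2) by simp
    then obtain v where "e x = Some v"
      by blast
    moreover have "x - n < k"
      using True by arith
    ultimately show ?thesis
      using True by (simp add: extend_env_def)
  next
    case outside: False
    have "e x = a x"
    proof (cases "x \<in> dom a")
      case True
      then show ?thesis using assms(1) by (simp add: map_le_def)
    next
      case False
      then have "x \<notin> dom e"
        using assms(2) outside by auto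
      with False show ?thesis by (simp add: domIff)
    qed
    with outside show ?thesis
      by (auto simp: extend_env_def)
  qed
qed

lemma matches_rel_pattern:
  assumes a: "dom a \<subseteq> {..<n}"
  shows "matches fi a (rel_pattern r [n..<n + k]) F
    = extend_env a n ` {u. GF (Rel r) u \<in># F \<and> length u = k}"
proof (intro equalityI subsetI)
  fix e assume "e \<in> matches fi a (rel_pattern r [n..<n + k]) F"
  then obtain H where m: "match fi a (rel_pattern r [n..<n + k]) F H e"
    by (auto simp: matches_def)
  then have "a \<subseteq>\<^sub>m e" "dom e = dom a \<union> {n..<n + k}"
    by (auto simp: match_def)
  then have "e = extend_env a n (vals fi e [n..<n + k])"
    using a by (rule eq_extend_env)
  moreover have "GF (Rel r) (vals fi e [n..<n + k]) \<in># F"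
    using m by (simp add: match_def rel_pattern_def comp_def)
  ultimately show "e \<in> extend_env a n ` {u. GF (Rel r) u \<in># F \<and> length u = k}"
    by (intro image_eqI) auto
next
  fix e assume "e \<in> extend_env a n ` {u. GF (Rel r) u \<in># F \<and> length u = k}"
  then obtain u where u: "GF (Rel r) u \<in># F" "length u = k" and e: "e = extend_env a n u"
    by blast
  then have "match fi a (rel_pattern r [n..<n + k]) F (F - {#GF (Rel r) u#}) e"
    using extend_env(1,2)[OF a, of u] extend_env(3)[OF a, of fi u]
    unfolding match_def pvars_rel_pattern by (auto simp: rel_pattern_def comp_def)
  then show "e \<in> matches fi a (rel_pattern r [n..<n + k]) F"
    by (auto simp: matches_def)
qed

text \<open>The invariant of the translation: in every extension b of a that binds xs and for which m is
  fresh, the continuation denotes \<Psi> of the tuple held by xs.\<close>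

definition cont_denotes :: "('g \<Rightarrow> 'v list \<Rightarrow> 'v) \<Rightarrow> ('p \<Rightarrow> 'v list \<Rightarrow> bool)
    \<Rightarrow> ('r,'g,'p,'v) gfact multiset \<Rightarrow> 'v env \<Rightarrow> nat \<Rightarrow> (nat list \<Rightarrow> nat \<Rightarrow> ('r,'g,'p,'v) query)
    \<Rightarrow> ('v list \<Rightarrow> ('r,'g,'p,'v) gfact set) \<Rightarrow> bool" where
  "cont_denotes fi pi F a len k \<Psi> = (\<forall>xs m b. a \<subseteq>\<^sub>m b \<longrightarrow> set xs \<subseteq> dom b \<longrightarrow> dom b \<subseteq> {..<m}
      \<longrightarrow> length xs = len \<longrightarrow> query_sem fi pi F b (k xs m) = \<Psi> (vals fi b xs))"

lemma cont_denotesD: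
  "cont_denotes fi pi F a len k \<Psi> \<Longrightarrow> a \<subseteq>\<^sub>m b \<Longrightarrow> set xs \<subseteq> dom b \<Longrightarrow> dom b \<subseteq> {..<m}
    \<Longrightarrow> length xs = len \<Longrightarrow> query_sem fi pi F b (k xs m) = \<Psi> (vals fi b xs)"
  unfolding cont_denotes_def by blast

lemma cont_denotes_emit: "cont_denotes fi pi F a len (emit R) (\<lambda>t. {GF R t})"
  by (simp add: cont_denotes_def emit_def comp_def)

lemma cont_denotes_member:
  assumes "set xs \<subseteq> dom b" and "length xs = len"
  shows "cont_denotes fi pi F b len (\<lambda>ys m. QImp (CB (vars_eq xs ys)) (emit R ys m))
    (\<lambda>t. if t = vals fi b xs then {GF R t} else {})"
  unfolding cont_denotes_def
proof (intro allI impI)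
  fix ys m b'
  assume b': "b \<subseteq>\<^sub>m b'" "set ys \<subseteq> dom b'" "dom b' \<subseteq> {..<m}" "length ys = len"
  have "evalb fi pi b' (vars_eq xs ys) \<longleftrightarrow> vals fi b' xs = vals fi b' ys"
    using assms(2) b'(4) by (intro evalb_vars_eq) simp
  also have "vals fi b' xs = vals fi b xs"
    using b'(1) assms(1) by (rule vals_map_le)
  finally have "evalb fi pi b' (vars_eq xs ys) \<longleftrightarrow> vals fi b' ys = vals fi b xs"
    by auto
  then show "query_sem fi pi F b' (QImp (CB (vars_eq xs ys)) (emit R ys m))
    = (if vals fi b' ys = vals fi b xs then {GF R (vals fi b' ys)} else {})"
    by (simp add: emit_def comp_def)
qed

lemma cont_denotes_proj:
  assumes "cont_denotes fi pi F a (length is) k \<Psi>" and "\<forall>i\<in>set is. 1 \<le> i \<and> i \<le> len"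
  shows "cont_denotes fi pi F a len (\<lambda>xs. k (map (column xs) is)) (\<lambda>t. \<Psi> (map (column t) is))"
  unfolding cont_denotes_def
proof (intro allI impI)
  fix xs m b
  assume "a \<subseteq>\<^sub>m b" "set xs \<subseteq> dom b" "dom b \<subseteq> {..<m}" "length xs = len"
  moreover from this have "set (map (column xs) is) \<subseteq> dom b"
    using assms(2) by force
  ultimately have "query_sem fi pi F b (k (map (column xs) is) m) = \<Psi> (vals fi b (map (column xs) is))"
    by (intro cont_denotesD[OF assms(1)]) auto
  also have "vals fi b (map (column xs) is) = map (column (vals fi b xs)) is"
    using assms(2) \<open>length xs = len\<close> by (auto simp: Suc_le_eq)
  finally show "query_sem fi pi F b (k (map (column xs) is) m) = \<Psi> (map (column (vals fi b xs)) is)" .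
qed

lemma evalb_rename_column:
  assumes "fvb \<phi> \<subseteq> {1..length xs}" and "set xs \<subseteq> dom b"
  shows "evalb fi pi b (rename_bexp (column xs) \<phi>) = evalb fi pi (tuple_env (vals fi b xs)) \<phi>"
  unfolding evalb_rename_bexp
proof (rule evalb_cong)
  fix i assume "i \<in> fvb \<phi>"
  then have i: "1 \<le> i" "i \<le> length xs"
    using assms(1) by auto
  then have "xs ! (i - 1) \<in> dom b"
    using assms(2) by (simp add: subset_iff)
  then obtain v where "b (xs ! (i - 1)) = Some v"
    by blast
  with i show "(b \<circ> column xs) i = tuple_env (vals fi b xs) i"
    by (simp add: tuple_env_def)
qed

lemma cont_denotes_sel:
  assumes "cont_denotes fi pi F a len k \<Psi>" and "fvb \<phi> \<subseteq> {1..len}"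
  shows "cont_denotes fi pi F a len (\<lambda>xs m. QImp (CB (rename_bexp (column xs) \<phi>)) (k xs m))
    (\<lambda>t. if evalb fi pi (tuple_env t) \<phi> then \<Psi> t else {})"
  unfolding cont_denotes_def
proof (intro allI impI)
  fix xs m b
  assume b: "a \<subseteq>\<^sub>m b" "set xs \<subseteq> dom b" "dom b \<subseteq> {..<m}" "length xs = len"
  then have "evalb fi pi b (rename_bexp (column xs) \<phi>) = evalb fi pi (tuple_env (vals fi b xs)) \<phi>"
    using assms(2) by (intro evalb_rename_column) auto
  with b show "query_sem fi pi F b (QImp (CB (rename_bexp (column xs) \<phi>)) (k xs m))
    = (if evalb fi pi (tuple_env (vals fi b xs)) \<phi> then \<Psi> (vals fi b xs) else {})"
    using cont_denotesD[OF assms(1)] by simp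
qed

lemma cont_denotes_append:
  assumes "cont_denotes fi pi F a (len + len') k \<Psi>"
    and "a \<subseteq>\<^sub>m b" and "set xs \<subseteq> dom b" and "length xs = len"
  shows "cont_denotes fi pi F b len' (\<lambda>ys. k (xs @ ys)) (\<lambda>t. \<Psi> (vals fi b xs @ t))"
  unfolding cont_denotes_def
proof (intro allI impI)
  fix ys m b'
  assume b': "b \<subseteq>\<^sub>m b'" "set ys \<subseteq> dom b'" "dom b' \<subseteq> {..<m}" "length ys = len'"
  have "dom b \<subseteq> dom b'"
    using b'(1) by (rule map_le_implies_dom_le)
  with assms b' have "query_sem fi pi F b' (k (xs @ ys) m) = \<Psi> (vals fi b' (xs @ ys))"
    by (intro cont_denotesD[OF assms(1)]) (auto intro: map_le_trans)
  also have "vals fi b' (xs @ ys) = vals fi b xs @ vals fi b' ys"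
    using vals_map_le[OF b'(1) assms(3)] by simp
  finally show "query_sem fi pi F b' (k (xs @ ys) m) = \<Psi> (vals fi b xs @ vals fi b' ys)" .
qed

lemma cont_denotes_diff:
  assumes "cont_denotes fi pi F a len k \<Psi>"
    and "\<And>b m xs. set xs \<subseteq> dom b \<Longrightarrow> dom b \<subseteq> {..<m} \<Longrightarrow> length xs = len
      \<Longrightarrow> cond_sem fi pi F b (C xs m) \<longleftrightarrow> vals fi b xs \<in> T"
  shows "cont_denotes fi pi F a len (\<lambda>xs m. QImp (CNot (C xs m)) (k xs m))
    (\<lambda>t. if t \<in> T then {} else \<Psi> t)"
  using assms by (simp add: cont_denotes_def)

lemma query_sem_rel_pattern:
  assumes "encodes S ar F I" and "r \<in> S" and a: "dom a \<subseteq> {..<n}"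
    and k: "cont_denotes fi pi F a (ar r) k \<Psi>"
  shows "query_sem fi pi F a (QFrom (rel_pattern r [n..<n + ar r]) (k [n..<n + ar r] (n + ar r)))
    = (\<Union>u\<in>I r. \<Psi> u)"
proof -
  have I: "I r = {u. GF (Rel r) u \<in># F \<and> length u = ar r}"
    using assms(1,2) by (auto simp: encodes_def)
  have "query_sem fi pi F (extend_env a n u) (k [n..<n + ar r] (n + ar r)) = \<Psi> u"
    if "length u = ar r" for u
  proof -
    have "query_sem fi pi F (extend_env a n u) (k [n..<n + ar r] (n + ar r))
        = \<Psi> (vals fi (extend_env a n u) [n..<n + ar r])"
      using extend_env(1,2)[OF a, of u] that a by (intro cont_denotesD[OF k]) auto
    also have "vals fi (extend_env a n u) [n..<n + ar r] = u"
      using extend_env(3)[OF a, of fi u] that by simp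
    finally show ?thesis .
  qed
  then show ?thesis
    by (simp add: matches_rel_pattern[OF a] I)
qed

lemma query_sem_tr:
  assumes F: "encodes S ar F I"
  shows "wf_ra S ar R \<Longrightarrow> dom a \<subseteq> {..<n} \<Longrightarrow> cont_denotes fi pi F a (arity ar R) k \<Psi> \<Longrightarrow>
    query_sem fi pi F a (tr ar R n k) = (\<Union>t\<in>eval_ra fi pi I R. \<Psi> t)"
proof (induction R arbitrary: a n k \<Psi>)
  case (Rel r)
  then show ?case using query_sem_rel_pattern[OF F] by simp
next
  case (Proj "is" R)
  then have "query_sem fi pi F a (tr ar R n (\<lambda>xs. k (map (column xs) is)))
      = (\<Union>t\<in>eval_ra fi pi I R. \<Psi> (map (column t) is))"
    by (intro Proj.IH cont_denotes_proj) auto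
  then show ?case by simp
next
  case (Sel \<phi> R)
  then have "query_sem fi pi F a (tr ar R n (\<lambda>xs m. QImp (CB (rename_bexp (column xs) \<phi>)) (k xs m)))
      = (\<Union>t\<in>eval_ra fi pi I R. if evalb fi pi (tuple_env t) \<phi> then \<Psi> t else {})"
    by (intro Sel.IH cont_denotes_sel) auto
  then show ?case by auto
next
  case (Union R1 R2)
  then show ?case by (simp add: Union.IH)
next
  case (Prod R1 R2)
  have "cont_denotes fi pi F a (arity ar R1) (\<lambda>xs m. tr ar R2 m (\<lambda>ys. k (xs @ ys)))
      (\<lambda>t1. \<Union>t2\<in>eval_ra fi pi I R2. \<Psi> (t1 @ t2))"
    unfolding cont_denotes_def using Prod.prems
    by (intro allI impI Prod.IH(2) cont_denotes_append[where len = "arity ar R1"]) auto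
  then have "query_sem fi pi F a (tr ar R1 n (\<lambda>xs m. tr ar R2 m (\<lambda>ys. k (xs @ ys))))
      = (\<Union>t1\<in>eval_ra fi pi I R1. \<Union>t2\<in>eval_ra fi pi I R2. \<Psi> (t1 @ t2))"
    using Prod.prems by (intro Prod.IH(1)) auto
  then show ?case by auto
next
  case (Diff R1 R2)
  let ?member = "\<lambda>xs m. has_answer (tr ar R2 m (\<lambda>ys m'. QImp (CB (vars_eq xs ys)) (emit R2 ys m')))"
  have "cond_sem fi pi F b (?member xs m) \<longleftrightarrow> vals fi b xs \<in> eval_ra fi pi I R2"
    if "set xs \<subseteq> dom b" "dom b \<subseteq> {..<m}" "length xs = arity ar R1" for b m xs
  proof -
    have "query_sem fi pi F b (tr ar R2 m (\<lambda>ys m'. QImp (CB (vars_eq xs ys)) (emit R2 ys m')))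
        = (\<Union>t\<in>eval_ra fi pi I R2. if t = vals fi b xs then {GF R2 t} else {})"
      using Diff.prems that by (intro Diff.IH(2) cont_denotes_member) auto
    then show ?thesis
      by (auto simp: cond_sem_has_answer split: if_splits)
  qed
  then have "query_sem fi pi F a (tr ar R1 n (\<lambda>xs m. QImp (CNot (?member xs m)) (k xs m)))
      = (\<Union>t\<in>eval_ra fi pi I R1. if t \<in> eval_ra fi pi I R2 then {} else \<Psi> t)"
    using Diff.prems by (intro Diff.IH(1) cont_denotes_diff) auto
  then show ?case by auto
qed

lemma query_sem_translate:
  assumes "encodes S ar F I" and "wf_ra S ar R"
  shows "query_sem fi pi F Map.empty (translate ar R) = GF R ` eval_ra fi pi I R"
proof -
  have "query_sem fi pi F Map.empty (tr ar R 0 (emit R)) = (\<Union>t\<in>eval_ra fi pi I R. {GF R t})"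
    by (rule query_sem_tr[OF assms]) (simp_all add: cont_denotes_emit)
  then show ?thesis
    by (auto simp: translate_def)
qed

theorem theorem5:
  fixes S :: "'r set" and ar :: "'r \<Rightarrow> nat"
    and fi :: "'g \<Rightarrow> 'v list \<Rightarrow> 'v" and pi :: "'p \<Rightarrow> 'v list \<Rightarrow> bool"
    and R :: "('r,'g,'p,'v) ra"
  assumes "finite S"
    and "wf_ra S ar R"
  shows "\<exists>Q :: ('r,'g,'p,'v) query. closed_query Q \<and> det_q fi Q \<and>
           (\<forall>(I :: 'r \<Rightarrow> 'v list set) (t :: 'v list). db_instance S ar I \<longrightarrow>
              ((\<exists>F. reduces_nf fi pi (init_q Q (trb S I)) (Ans (F + {#GF R t#})))
               \<longleftrightarrow> t \<in> eval_ra fi pi I R))"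
proof (intro exI conjI allI impI)
  show "closed_query (translate ar R)"
    using assms(2) by (rule closed_translate)
  show "det_q fi (translate ar R)"
    by (rule det_translate)
  fix I :: "'r \<Rightarrow> 'v list set" and t :: "'v list"
  assume "db_instance S ar I"
  with assms(1) have "encodes S ar (trb S I) I"
    by (rule encodes_trb)
  then have "query_sem fi pi (trb S I) Map.empty (translate ar R) = GF R ` eval_ra fi pi I R"
    using assms(2) by (rule query_sem_translate)
  then show "(\<exists>F. reduces_nf fi pi (init_q (translate ar R) (trb S I)) (Ans (F + {#GF R t#})))
      \<longleftrightarrow> t \<in> eval_ra fi pi I R"
    by (simp only: det_query_answer_iff[OF det_translate]) auto
qed

end
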